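(* If an nfc-transducer $\mathcal{T}=(Q,V,\Delta,q_0)$ is consistent with a BPA system $\mathcal{G}=(V,\mathit{Act},\mathcal{R})$, then the equivalence $\equiv^{\mathcal{T}}$ on $V^*$, defined by $\alpha\equiv^{\mathcal{T}}\beta$ iff $\mathcal{T}_{q_0}(\alpha)=\mathcal{T}_{q_0}(\beta)$, is a branching bisimulation in $\mathcal{L}_\mathcal{G}$. Consequently $\mathcal{T}(\alpha)=\mathcal{T}(\beta)$ implies $\alpha\sim\beta$.
   Context: A BPA system $\mathcal{G}=(V,\mathit{Act},\mathcal{R})$: finite variables $V$, finite actions $\mathit{Act}$ (possibly containing silent $\tau$), rules $A\xrightarrow{a}\alpha$ ($A\in V,\alpha\in V^*$). LTS $\mathcal{L}_\mathcal{G}$ has states $V^*$ and transitions $A\beta\xrightarrow{a}\alpha\beta$ for rules $A\xrightarrow{a}\alpha$, $\beta\in V^*$. Branching bisimulation: a relation $\mathcal{B}$ such that for each $(s,t)\in\mathcal{B}$, each move $s\xrightarrow{a}s'$ is matched by either $a=\tau$ and $(s',t)\in\mathcal{B}$, or a path $t=t_0\xrightarrow{\tau}\cdots\xrightarrow{\tau}t_k\xrightarrow{a}t'$ with $(s',t')\in\mathcal{B}$ and $(s,t_i)\in\mathcal{B}$ for $i\in[1,k]$, and symmetrically for moves of $t$; $\sim$ is the largest branching bisimulation. Transducer $\mathcal{T}=(Q,V,\Delta,q_0)$, $\Delta:Q\times V\to Q\times V^*$, reading right to left: $q'\xleftarrow{A/\gamma}q$ means $\Delta(q,A)=(q',\gamma)$,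 extended by $q\xleftarrow{\varepsilon/\varepsilon}q$ and composition $q''\xleftarrow{\alpha A/\beta\gamma}q$ from $q'\xleftarrow{A/\gamma}q$, $q''\xleftarrow{\alpha/\beta}q'$. $\mathcal{T}_q(\alpha)$ is the output from $q$ on $\alpha$; $\mathcal{T}=\mathcal{T}_{q_0}$. $q$-normal forms: $\varepsilon$ or $A_k\cdots A_1$ with $q_k\xleftarrow{A_k/A_k}\cdots q_1\xleftarrow{A_1/A_1}q$. nfc-transducer: each $\mathcal{T}_q(A)$ is a $q$-normal form and $q'\xleftarrow{A/\gamma}q$ implies $q'\xleftarrow{\gamma/\gamma}q$. Long moves: $\alpha\overset{a}{\Rightarrow}_q\beta$ if either $a=\tau$ and $\beta=\mathcal{T}_q(\alpha)$, or $\alpha=\alpha_0\xrightarrow{\tau}\alpha_1\cdots\xrightarrow{\tau}\alpha_k\xrightarrow{a}\beta'$ in $\mathcal{L}_\mathcal{G}$ ($k\ge0$) with $\mathcal{T}_q(\alpha_0)=\cdots=\mathcal{T}_q(\alpha_k)$ and $\mathcal{T}_q(\beta')=\beta$. $\alpha_1\approx_q\alpha_2$ iff for all $a$, $\{\beta\mid\alpha_1\overset{a}{\Rightarrow}_q\beta\}=\{\beta\mid\alpha_2\overset{a}{\Rightarrow}_q\beta\}$. Consistency of $\mathcal{T}$ with $\mathcal{G}$: (1) $A\approx_{q_0}\varepsilon$ if $\mathcal{T}_{q_0}(A)=\varepsilon$; (2) $A\approx_q\mathcal{T}_q(A)$ if $\mathcal{T}_q(A)\ne\varepsilon$; (3)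 $AC\approx_qC$ if $\mathcal{T}_q(AC)=\mathcal{T}_q(C)=C$. *)

theory Defs
  imports Main
begin

text \<open>A BPA system is given by a finite set of variables V, a finite set of actions Act,
  a finite set of rules R (triples (A, a, alpha) standing for A --a--> alpha) and a
  distinguished silent action tau (which may or may not belong to Act).
  States of the LTS are words over V, represented as lists (head = leftmost symbol).\<close>

definition bpa_system :: "'v set \<Rightarrow> 'a set \<Rightarrow> ('v \<times> 'a \<times> 'v list) set \<Rightarrow> bool" where
  "bpa_system V Act R \<longleftrightarrow> finite V \<and> finite Act \<and> finite R \<and> R \<subseteq> V \<times> Act \<times> lists V"

definition lts_step :: "('v \<times> 'a \<times> 'v list) set \<Rightarrow> 'v list \<Rightarrow> 'a \<Rightarrow> 'v list \<Rightarrow> bool" where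
  "lts_step R s a s' \<longleftrightarrow> (\<exists>A \<alpha> \<beta>. s = A # \<beta> \<and> (A, a, \<alpha>) \<in> R \<and> s' = \<alpha> @ \<beta>)"

definition bb_match :: "('v \<times> 'a \<times> 'v list) set \<Rightarrow> 'a \<Rightarrow> ('v list \<times> 'v list) set
    \<Rightarrow> 'v list \<Rightarrow> 'v list \<Rightarrow> bool" where
  "bb_match R tau B s t \<longleftrightarrow>
     (\<forall>a s'. lts_step R s a s' \<longrightarrow>
        ((a = tau \<and> (s', t) \<in> B) \<or>
         (\<exists>tk t'. (\<lambda>x y. lts_step R x tau y \<and> (s, y) \<in> B)\<^sup>*\<^sup>* t tk
                 \<and> lts_step R tk a t' \<and> (s', t') \<in> B)))"

definition branching_bisimulation :: "('v \<times> 'a \<times> 'v list) set \<Rightarrow> 'a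
    \<Rightarrow> ('v list \<times> 'v list) set \<Rightarrow> bool" where
  "branching_bisimulation R tau B \<longleftrightarrow>
     (\<forall>(s, t) \<in> B. bb_match R tau B s t \<and> bb_match R tau (B\<inverse>) t s)"

definition branching_bisimilar :: "('v \<times> 'a \<times> 'v list) set \<Rightarrow> 'a \<Rightarrow> 'v list \<Rightarrow> 'v list \<Rightarrow> bool" where
  "branching_bisimilar R tau s t \<longleftrightarrow> (\<exists>B. branching_bisimulation R tau B \<and> (s, t) \<in> B)"

definition transducer :: "'q set \<Rightarrow> 'v set \<Rightarrow> ('q \<Rightarrow> 'v \<Rightarrow> 'q \<times> 'v list) \<Rightarrow> 'q \<Rightarrow> bool" where
  "transducer Q V \<Delta> q0 \<longleftrightarrow> finite Q \<and> q0 \<in> Q \<and>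
     (\<forall>q\<in>Q. \<forall>A\<in>V. fst (\<Delta> q A) \<in> Q \<and> snd (\<Delta> q A) \<in> lists V)"

text \<open>Run on a reversed word (the transducer reads right to left).
  run_rev Delta q xs = (q'', out) for xs = rev alpha means q'' <-alpha/out- q.\<close>
fun run_rev :: "('q \<Rightarrow> 'v \<Rightarrow> 'q \<times> 'v list) \<Rightarrow> 'q \<Rightarrow> 'v list \<Rightarrow> 'q \<times> 'v list" where
  "run_rev \<Delta> q [] = (q, [])"
| "run_rev \<Delta> q (A # xs) =
     (let (q', \<gamma>) = \<Delta> q A; (q'', \<beta>) = run_rev \<Delta> q' xs in (q'', \<beta> @ \<gamma>))"

definition run :: "('q \<Rightarrow> 'v \<Rightarrow> 'q \<times> 'v list) \<Rightarrow> 'q \<Rightarrow> 'v list \<Rightarrow> 'q \<times> 'v list" where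
  "run \<Delta> q \<alpha> = run_rev \<Delta> q (rev \<alpha>)"

definition T_out :: "('q \<Rightarrow> 'v \<Rightarrow> 'q \<times> 'v list) \<Rightarrow> 'q \<Rightarrow> 'v list \<Rightarrow> 'v list" where
  "T_out \<Delta> q \<alpha> = snd (run \<Delta> q \<alpha>)"

text \<open>q-normal forms: epsilon or A_k...A_1 with q_k <-A_k/A_k- ... q_1 <-A_1/A_1- q.
  copies_rev checks, on the reversed word, that every single step copies its symbol.\<close>
fun copies_rev :: "('q \<Rightarrow> 'v \<Rightarrow> 'q \<times> 'v list) \<Rightarrow> 'q \<Rightarrow> 'v list \<Rightarrow> bool" where
  "copies_rev \<Delta> q [] = True"
| "copies_rev \<Delta> q (A # xs) = (snd (\<Delta> q A) = [A] \<and> copies_rev \<Delta> (fst (\<Delta> q A)) xs)"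

definition normal_form :: "('q \<Rightarrow> 'v \<Rightarrow> 'q \<times> 'v list) \<Rightarrow> 'q \<Rightarrow> 'v list \<Rightarrow> bool" where
  "normal_form \<Delta> q \<alpha> \<longleftrightarrow> copies_rev \<Delta> q (rev \<alpha>)"

definition nfc_transducer :: "'q set \<Rightarrow> 'v set \<Rightarrow> ('q \<Rightarrow> 'v \<Rightarrow> 'q \<times> 'v list) \<Rightarrow> 'q \<Rightarrow> bool" where
  "nfc_transducer Q V \<Delta> q0 \<longleftrightarrow> transducer Q V \<Delta> q0 \<and>
     (\<forall>q\<in>Q. \<forall>A\<in>V. normal_form \<Delta> q (T_out \<Delta> q [A]) \<and>
        (\<forall>q' \<gamma>. \<Delta> q A = (q', \<gamma>) \<longrightarrow> run \<Delta> q \<gamma> = (q', \<gamma>)))"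

definition long_move :: "('v \<times> 'a \<times> 'v list) set \<Rightarrow> 'a \<Rightarrow> ('q \<Rightarrow> 'v \<Rightarrow> 'q \<times> 'v list) \<Rightarrow> 'q
    \<Rightarrow> 'v list \<Rightarrow> 'a \<Rightarrow> 'v list \<Rightarrow> bool" where
  "long_move R tau \<Delta> q \<alpha> a \<beta> \<longleftrightarrow>
     (a = tau \<and> \<beta> = T_out \<Delta> q \<alpha>) \<or>
     (\<exists>\<alpha>k \<beta>'. (\<lambda>x y. lts_step R x tau y \<and> T_out \<Delta> q x = T_out \<Delta> q y)\<^sup>*\<^sup>* \<alpha> \<alpha>k
              \<and> lts_step R \<alpha>k a \<beta>' \<and> T_out \<Delta> q \<beta>' = \<beta>)"

definition approx_q :: "('v \<times> 'a \<times> 'v list) set \<Rightarrow> 'a \<Rightarrow> ('q \<Rightarrow> 'v \<Rightarrow> 'q \<times> 'v list) \<Rightarrow> 'q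
    \<Rightarrow> 'v list \<Rightarrow> 'v list \<Rightarrow> bool" where
  "approx_q R tau \<Delta> q \<alpha>1 \<alpha>2 \<longleftrightarrow>
     (\<forall>a. {\<beta>. long_move R tau \<Delta> q \<alpha>1 a \<beta>} = {\<beta>. long_move R tau \<Delta> q \<alpha>2 a \<beta>})"

definition consistent :: "'q set \<Rightarrow> 'v set \<Rightarrow> ('q \<Rightarrow> 'v \<Rightarrow> 'q \<times> 'v list) \<Rightarrow> 'q
    \<Rightarrow> ('v \<times> 'a \<times> 'v list) set \<Rightarrow> 'a \<Rightarrow> bool" where
  "consistent Q V \<Delta> q0 R tau \<longleftrightarrow>
     (\<forall>A\<in>V. T_out \<Delta> q0 [A] = [] \<longrightarrow> approx_q R tau \<Delta> q0 [A] []) \<and>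
     (\<forall>q\<in>Q. \<forall>A\<in>V. T_out \<Delta> q [A] \<noteq> [] \<longrightarrow> approx_q R tau \<Delta> q [A] (T_out \<Delta> q [A])) \<and>
     (\<forall>q\<in>Q. \<forall>A\<in>V. \<forall>C\<in>V. T_out \<Delta> q [A, C] = T_out \<Delta> q [C] \<and> T_out \<Delta> q [C] = [C]
        \<longrightarrow> approx_q R tau \<Delta> q [A, C] [C])"

definition T_equiv :: "'v set \<Rightarrow> ('q \<Rightarrow> 'v \<Rightarrow> 'q \<times> 'v list) \<Rightarrow> 'q \<Rightarrow> ('v list \<times> 'v list) set" where
  "T_equiv V \<Delta> q0 = {(\<alpha>, \<beta>). \<alpha> \<in> lists V \<and> \<beta> \<in> lists V \<and> T_out \<Delta> q0 \<alpha> = T_out \<Delta> q0 \<beta>}"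

end

theory Submission
  imports Defs
begin

text \<open>Consistency relates every letter to its image under the transducer, locally in each
  state. Since the transducer reads right to left, the long-move equivalence \<open>\<approx>\<close> is a
  congruence for contexts: a suffix may be replaced by an equivalent one with the same run, and a
  visible prefix by one equivalent in the state reached after the suffix. Induction on the word
  then gives \<open>\<alpha> \<approx>\<^sub>q\<^sub>0 T(\<alpha>)\<close>, so words with the same image have the same long moves. A long move
  from \<open>t\<close> matching a move of \<open>s\<close> is exactly the path a branching bisimulation asks for: its
  inert \<open>\<tau>\<close>-steps do not change the image, so every intermediate word stays equivalent to \<open>s\<close>.\<close>

abbreviation run_state :: "('q \<Rightarrow> 'v \<Rightarrow> 'q \<times> 'v list) \<Rightarrow> 'q \<Rightarrow> 'v list \<Rightarrow> 'q" where
  "run_state \<Delta> q \<alpha> \<equiv> fst (run \<Delta> q \<alpha>)"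

lemma run_rev_Cons_state [simp]:
  "fst (run_rev \<Delta> q (A # xs)) = fst (run_rev \<Delta> (fst (\<Delta> q A)) xs)"
  by (simp split: prod.splits)

lemma run_rev_Cons_output [simp]:
  "snd (run_rev \<Delta> q (A # xs)) = snd (run_rev \<Delta> (fst (\<Delta> q A)) xs) @ snd (\<Delta> q A)"
  by (simp split: prod.splits)

declare run_rev.simps(2) [simp del]

lemma run_rev_append:
  "run_rev \<Delta> q (xs @ ys) =
     (fst (run_rev \<Delta> (fst (run_rev \<Delta> q xs)) ys),
      snd (run_rev \<Delta> (fst (run_rev \<Delta> q xs)) ys) @ snd (run_rev \<Delta> q xs))"
  by (induction xs arbitrary: q) (auto simp: prod_eq_iff)

lemma run_Nil [simp]: "run \<Delta> q [] = (q, [])"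
  by (simp add: run_def)

lemma run_singleton [simp]: "run \<Delta> q [A] = \<Delta> q A"
  by (simp add: run_def prod_eq_iff)

lemma run_eq_iff:
  "run \<Delta> q \<alpha> = run \<Delta> q' \<beta> \<longleftrightarrow>
     run_state \<Delta> q \<alpha> = run_state \<Delta> q' \<beta> \<and> T_out \<Delta> q \<alpha> = T_out \<Delta> q' \<beta>"
  by (simp add: prod_eq_iff T_out_def)

lemma T_out_Nil [simp]: "T_out \<Delta> q [] = []"
  by (simp add: T_out_def)

lemma T_out_append: "T_out \<Delta> q (x @ \<beta>) = T_out \<Delta> (run_state \<Delta> q \<beta>) x @ T_out \<Delta> q \<beta>"
  by (simp add: T_out_def run_def run_rev_append)

lemma run_state_append: "run_state \<Delta> q (x @ \<beta>) = run_state \<Delta> (run_state \<Delta> q \<beta>) x"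
  by (simp add: run_def run_rev_append)

lemma T_out_singleton [simp]: "T_out \<Delta> q [A] = snd (\<Delta> q A)"
  by (simp add: T_out_def)

lemma transducer_run_closed:
  assumes "transducer Q V \<Delta> q0" and "q \<in> Q" and "\<alpha> \<in> lists V"
  shows "run_state \<Delta> q \<alpha> \<in> Q \<and> T_out \<Delta> q \<alpha> \<in> lists V"
  using assms(2,3)
proof (induction \<alpha> arbitrary: q rule: rev_induct)
  case (snoc A \<alpha>)
  then have "fst (\<Delta> q A) \<in> Q" and "snd (\<Delta> q A) \<in> lists V"
    using assms(1) by (auto simp: transducer_def)
  with snoc show ?case by (simp add: run_state_append T_out_append)
qed simp

lemma normal_form_append:
  "normal_form \<Delta> q (x @ \<beta>) \<longleftrightarrow> normal_form \<Delta> q \<beta> \<and> normal_form \<Delta> (run_state \<Delta> q \<beta>) x"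
proof -
  have "copies_rev \<Delta> q (xs @ ys) \<longleftrightarrow> copies_rev \<Delta> q xs \<and> copies_rev \<Delta> (fst (run_rev \<Delta> q xs)) ys"
    for q xs ys
    by (induction xs arbitrary: q) auto
  then show ?thesis by (simp add: normal_form_def run_def)
qed

lemma normal_form_singleton: "normal_form \<Delta> q [A] \<longleftrightarrow> T_out \<Delta> q [A] = [A]"
  by (simp add: normal_form_def T_out_def)

lemma normal_form_T_out_self:
  assumes "normal_form \<Delta> q \<alpha>"
  shows "T_out \<Delta> q \<alpha> = \<alpha>"
  using assms
proof (induction \<alpha> arbitrary: q rule: rev_induct)
  case (snoc A \<alpha>)
  then show ?case by (simp add: normal_form_append normal_form_singleton T_out_append)
qed simp

lemma nfc_transducer_step:
  assumes "nfc_transducer Q V \<Delta> q0" and "q \<in> Q" and "A \<in> V"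
  shows "fst (\<Delta> q A) \<in> Q"
    and "run_state \<Delta> q (snd (\<Delta> q A)) = fst (\<Delta> q A)"
    and "normal_form \<Delta> q (snd (\<Delta> q A))"
proof -
  from assms show "fst (\<Delta> q A) \<in> Q" and "normal_form \<Delta> q (snd (\<Delta> q A))"
    by (simp_all add: nfc_transducer_def transducer_def)
  from assms have "\<forall>q' \<gamma>. \<Delta> q A = (q', \<gamma>) \<longrightarrow> run \<Delta> q \<gamma> = (q', \<gamma>)"
    by (simp add: nfc_transducer_def)
  then have "run \<Delta> q (snd (\<Delta> q A)) = \<Delta> q A" by (metis prod.collapse)
  then show "run_state \<Delta> q (snd (\<Delta> q A)) = fst (\<Delta> q A)" by simp
qed

lemma nfc_transducer_run_T_out:
  assumes nfc: "nfc_transducer Q V \<Delta> q0" and "q \<in> Q" and "\<alpha> \<in> lists V"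
  shows "run \<Delta> q (T_out \<Delta> q \<alpha>) = run \<Delta> q \<alpha>"
  using assms(2,3)
proof (induction \<alpha> arbitrary: q rule: rev_induct)
  case (snoc A \<alpha>)
  then have "run \<Delta> (fst (\<Delta> q A)) (T_out \<Delta> (fst (\<Delta> q A)) \<alpha>) = run \<Delta> (fst (\<Delta> q A)) \<alpha>"
    using nfc_transducer_step(1)[OF nfc] by simp
  moreover have "run_state \<Delta> q (snd (\<Delta> q A)) = fst (\<Delta> q A)"
    and "T_out \<Delta> q (snd (\<Delta> q A)) = snd (\<Delta> q A)"
    using snoc.prems nfc_transducer_step(2,3)[OF nfc] by (auto intro: normal_form_T_out_self)
  ultimately show ?case
    by (simp add: run_eq_iff T_out_append run_state_append)
qed simp

lemma nfc_transducer_normal_form_T_out: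
  assumes nfc: "nfc_transducer Q V \<Delta> q0" and "q \<in> Q" and "\<alpha> \<in> lists V"
  shows "normal_form \<Delta> q (T_out \<Delta> q \<alpha>)"
  using assms(2,3)
proof (induction \<alpha> arbitrary: q rule: rev_induct)
  case (snoc A \<alpha>)
  then have "normal_form \<Delta> (fst (\<Delta> q A)) (T_out \<Delta> (fst (\<Delta> q A)) \<alpha>)"
    using nfc_transducer_step(1)[OF nfc] by simp
  moreover have "run_state \<Delta> q (snd (\<Delta> q A)) = fst (\<Delta> q A)" and "normal_form \<Delta> q (snd (\<Delta> q A))"
    using snoc.prems nfc_transducer_step(2,3)[OF nfc] by auto
  ultimately show ?case
    by (simp add: T_out_append normal_form_append)
qed (simp add: normal_form_def)

lemma lts_step_append: "lts_step R x a x' \<Longrightarrow> lts_step R (x @ \<beta>) a (x' @ \<beta>)"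
  unfolding lts_step_def by auto

lemma lts_step_append_inv:
  "lts_step R (x @ \<beta>) a y \<Longrightarrow> x \<noteq> [] \<Longrightarrow> \<exists>x'. lts_step R x a x' \<and> y = x' @ \<beta>"
  unfolding lts_step_def by (cases x) auto

lemma bpa_system_lts_step_lists:
  "bpa_system V Act R \<Longrightarrow> lts_step R s a s' \<Longrightarrow> s \<in> lists V \<Longrightarrow> s' \<in> lists V"
  unfolding bpa_system_def lts_step_def by fastforce

definition inert_step :: "('v \<times> 'a \<times> 'v list) set \<Rightarrow> 'a \<Rightarrow> ('q \<Rightarrow> 'v \<Rightarrow> 'q \<times> 'v list) \<Rightarrow> 'q
    \<Rightarrow> 'v list \<Rightarrow> 'v list \<Rightarrow> bool" where
  "inert_step R tau \<Delta> q x y \<longleftrightarrow> lts_step R x tau y \<and> T_out \<Delta> q x = T_out \<Delta> q y"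

lemma long_move_iff:
  "long_move R tau \<Delta> q \<alpha> a \<beta> \<longleftrightarrow> (a = tau \<and> \<beta> = T_out \<Delta> q \<alpha>) \<or>
     (\<exists>\<alpha>k \<beta>'. (inert_step R tau \<Delta> q)\<^sup>*\<^sup>* \<alpha> \<alpha>k \<and> lts_step R \<alpha>k a \<beta>' \<and> T_out \<Delta> q \<beta>' = \<beta>)"
proof -
  have "inert_step R tau \<Delta> q = (\<lambda>x y. lts_step R x tau y \<and> T_out \<Delta> q x = T_out \<Delta> q y)"
    by (intro ext) (simp add: inert_step_def)
  then show ?thesis by (simp add: long_move_def)
qed

lemma long_move_tau: "long_move R tau \<Delta> q \<alpha> tau (T_out \<Delta> q \<alpha>)"
  by (simp add: long_move_iff)

lemma long_move_step:
  "(inert_step R tau \<Delta> q)\<^sup>*\<^sup>* \<alpha> \<alpha>k \<Longrightarrow> lts_step R \<alpha>k a \<beta>' \<Longrightarrow> long_move R tau \<Delta> q \<alpha> a (T_out \<Delta> q \<beta>')"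
  by (auto simp: long_move_iff)

lemma inert_steps_T_out: "(inert_step R tau \<Delta> q)\<^sup>*\<^sup>* x y \<Longrightarrow> T_out \<Delta> q x = T_out \<Delta> q y"
  by (induction rule: rtranclp_induct) (auto simp: inert_step_def)

lemma long_move_inert_steps:
  assumes "(inert_step R tau \<Delta> q)\<^sup>*\<^sup>* \<alpha> \<alpha>'" and "long_move R tau \<Delta> q \<alpha>' a w"
  shows "long_move R tau \<Delta> q \<alpha> a w"
  using assms inert_steps_T_out[OF assms(1)] by (auto simp: long_move_iff intro: rtranclp_trans)

lemma inert_steps_append:
  "(inert_step R tau \<Delta> (run_state \<Delta> q \<beta>))\<^sup>*\<^sup>* x z \<Longrightarrow> (inert_step R tau \<Delta> q)\<^sup>*\<^sup>* (x @ \<beta>) (z @ \<beta>)"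
proof (induction rule: rtranclp_induct)
  case (step y z)
  then have "inert_step R tau \<Delta> q (y @ \<beta>) (z @ \<beta>)"
    by (auto simp: inert_step_def lts_step_append T_out_append)
  with step.IH show ?case by (rule rtranclp.rtrancl_into_rtrancl)
qed simp

lemma inert_step_append_inv:
  assumes "inert_step R tau \<Delta> q (z @ \<beta>) y" and "z \<noteq> []"
  obtains z' where "y = z' @ \<beta>" and "inert_step R tau \<Delta> (run_state \<Delta> q \<beta>) z z'"
proof -
  obtain z' where "lts_step R z tau z'" and "y = z' @ \<beta>"
    using assms lts_step_append_inv unfolding inert_step_def by metis
  with assms(1) show ?thesis
    using that by (auto simp: inert_step_def T_out_append)
qed

lemma inert_steps_append_cases:
  assumes "(inert_step R tau \<Delta> q)\<^sup>*\<^sup>* (x @ \<beta>) y"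
  shows "(\<exists>z. z \<noteq> [] \<and> y = z @ \<beta> \<and> (inert_step R tau \<Delta> (run_state \<Delta> q \<beta>))\<^sup>*\<^sup>* x z) \<or>
    ((inert_step R tau \<Delta> (run_state \<Delta> q \<beta>))\<^sup>*\<^sup>* x [] \<and> (inert_step R tau \<Delta> q)\<^sup>*\<^sup>* \<beta> y)"
  using assms
proof (induction rule: rtranclp_induct)
  case base
  then show ?case by (cases x) auto
next
  case (step y y')
  from step.IH show ?case
  proof
    assume "\<exists>z. z \<noteq> [] \<and> y = z @ \<beta> \<and> (inert_step R tau \<Delta> (run_state \<Delta> q \<beta>))\<^sup>*\<^sup>* x z"
    then obtain z where "z \<noteq> []" and "y = z @ \<beta>"
      and x_z: "(inert_step R tau \<Delta> (run_state \<Delta> q \<beta>))\<^sup>*\<^sup>* x z" by blast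
    with step.hyps(2) obtain z' where "y' = z' @ \<beta>"
      and "inert_step R tau \<Delta> (run_state \<Delta> q \<beta>) z z'"
      by (auto elim: inert_step_append_inv)
    with x_z show ?thesis
      by (cases "z' = []") (auto intro: rtranclp.rtrancl_into_rtrancl)
  qed (use step.hyps(2) in \<open>auto intro: rtranclp.rtrancl_into_rtrancl\<close>)
qed

lemma long_move_append:
  assumes "long_move R tau \<Delta> (run_state \<Delta> q \<beta>) y b v"
  shows "long_move R tau \<Delta> q (y @ \<beta>) b (v @ T_out \<Delta> q \<beta>)"
  using assms[unfolded long_move_iff]
proof (elim disjE exE conjE)
  assume "b = tau" and "v = T_out \<Delta> (run_state \<Delta> q \<beta>) y"
  then show ?thesis using long_move_tau[of R tau \<Delta> q "y @ \<beta>"] by (simp add: T_out_append)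
next
  fix yk y'
  assume "(inert_step R tau \<Delta> (run_state \<Delta> q \<beta>))\<^sup>*\<^sup>* y yk" and "lts_step R yk b y'"
    and "T_out \<Delta> (run_state \<Delta> q \<beta>) y' = v"
  then show ?thesis
    using long_move_step[OF inert_steps_append lts_step_append] by (auto simp: T_out_append)
qed

lemma approx_q_iff:
  "approx_q R tau \<Delta> q \<alpha>1 \<alpha>2 \<longleftrightarrow> (\<forall>a w. long_move R tau \<Delta> q \<alpha>1 a w \<longleftrightarrow> long_move R tau \<Delta> q \<alpha>2 a w)"
  by (auto simp: approx_q_def set_eq_iff)

lemma approx_q_sym: "approx_q R tau \<Delta> q \<alpha>1 \<alpha>2 \<Longrightarrow> approx_q R tau \<Delta> q \<alpha>2 \<alpha>1"
  by (simp add: approx_q_def)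

lemma approx_q_trans:
  "approx_q R tau \<Delta> q \<alpha>1 \<alpha>2 \<Longrightarrow> approx_q R tau \<Delta> q \<alpha>2 \<alpha>3 \<Longrightarrow> approx_q R tau \<Delta> q \<alpha>1 \<alpha>3"
  by (simp add: approx_q_def)

lemma long_move_suffix_cong:
  assumes approx: "approx_q R tau \<Delta> q \<beta> \<beta>'" and run: "run \<Delta> q \<beta> = run \<Delta> q \<beta>'"
    and move: "long_move R tau \<Delta> q (x @ \<beta>) a w"
  shows "long_move R tau \<Delta> q (x @ \<beta>') a w"
proof -
  define p where "p = run_state \<Delta> q \<beta>"
  have state: "run_state \<Delta> q \<beta> = run_state \<Delta> q \<beta>'" and T_out_\<beta>: "T_out \<Delta> q \<beta> = T_out \<Delta> q \<beta>'"
    using run by (simp_all add: run_eq_iff)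
  from move[unfolded long_move_iff] show ?thesis
  proof (elim disjE exE conjE)
    assume "a = tau" and "w = T_out \<Delta> q (x @ \<beta>)"
    then show ?thesis
      using long_move_tau[of R tau \<Delta> q "x @ \<beta>'"] by (simp add: T_out_append T_out_\<beta> run_eq_iff run)
  next
    fix \<alpha>k \<beta>''
    assume steps: "(inert_step R tau \<Delta> q)\<^sup>*\<^sup>* (x @ \<beta>) \<alpha>k" and "lts_step R \<alpha>k a \<beta>''"
      and w: "T_out \<Delta> q \<beta>'' = w"
    from inert_steps_append_cases[OF steps, folded p_def] show ?thesis
    proof (elim disjE exE conjE)
      fix z
      assume "z \<noteq> []" and "\<alpha>k = z @ \<beta>" and x_z: "(inert_step R tau \<Delta> p)\<^sup>*\<^sup>* x z"
      with \<open>lts_step R \<alpha>k a \<beta>''\<close> obtain z' where "lts_step R z a z'" and "\<beta>'' = z' @ \<beta>"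
        using lts_step_append_inv by metis
      with x_z have "long_move R tau \<Delta> p x a (T_out \<Delta> p z')"
        by (blast intro: long_move_step)
      then have "long_move R tau \<Delta> q (x @ \<beta>') a (T_out \<Delta> p z' @ T_out \<Delta> q \<beta>')"
        using long_move_append by (fastforce simp: p_def state)
      then show ?thesis
        using w \<open>\<beta>'' = z' @ \<beta>\<close> by (simp add: p_def T_out_append T_out_\<beta>)
    next
      assume x_Nil: "(inert_step R tau \<Delta> p)\<^sup>*\<^sup>* x []" and "(inert_step R tau \<Delta> q)\<^sup>*\<^sup>* \<beta> \<alpha>k"
      then have "long_move R tau \<Delta> q \<beta>' a w"
        using approx \<open>lts_step R \<alpha>k a \<beta>''\<close> w by (auto simp: approx_q_iff intro: long_move_step)
      moreover have "(inert_step R tau \<Delta> q)\<^sup>*\<^sup>* (x @ \<beta>') \<beta>'"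
        using inert_steps_append[of R tau \<Delta> q \<beta>' x "[]"] x_Nil by (simp add: p_def state)
      ultimately show ?thesis by (blast intro: long_move_inert_steps)
    qed
  qed
qed

lemma approx_q_suffix_cong:
  assumes "approx_q R tau \<Delta> q \<beta> \<beta>'" and "run \<Delta> q \<beta> = run \<Delta> q \<beta>'"
  shows "approx_q R tau \<Delta> q (x @ \<beta>) (x @ \<beta>')"
  unfolding approx_q_iff[of R tau \<Delta> q "x @ \<beta>"]
  using long_move_suffix_cong[OF assms]
    long_move_suffix_cong[OF approx_q_sym[OF assms(1)] assms(2)[symmetric]] by blast

lemma long_move_prefix_cong:
  assumes visible: "T_out \<Delta> (run_state \<Delta> q \<beta>) x \<noteq> []"
    and approx: "approx_q R tau \<Delta> (run_state \<Delta> q \<beta>) x y"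
    and move: "long_move R tau \<Delta> q (x @ \<beta>) a w"
  shows "long_move R tau \<Delta> q (y @ \<beta>) a w"
proof -
  define p where "p = run_state \<Delta> q \<beta>"
  have transfer: "long_move R tau \<Delta> q (y @ \<beta>) b (v @ T_out \<Delta> q \<beta>)"
    if "long_move R tau \<Delta> p x b v" for b v
    using that approx long_move_append by (fastforce simp: approx_q_iff p_def)
  from move[unfolded long_move_iff] show ?thesis
  proof (elim disjE exE conjE)
    assume "a = tau" and "w = T_out \<Delta> q (x @ \<beta>)"
    then show ?thesis
      using transfer[OF long_move_tau] by (simp add: T_out_append p_def)
  next
    fix \<alpha>k \<beta>''
    assume steps: "(inert_step R tau \<Delta> q)\<^sup>*\<^sup>* (x @ \<beta>) \<alpha>k" and "lts_step R \<alpha>k a \<beta>''"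
      and w: "T_out \<Delta> q \<beta>'' = w"
    have "\<not> (inert_step R tau \<Delta> p)\<^sup>*\<^sup>* x []"
      using visible inert_steps_T_out by (fastforce simp: p_def)
    with inert_steps_append_cases[OF steps] obtain z where "z \<noteq> []" and "\<alpha>k = z @ \<beta>"
      and x_z: "(inert_step R tau \<Delta> p)\<^sup>*\<^sup>* x z" by (auto simp: p_def)
    with \<open>lts_step R \<alpha>k a \<beta>''\<close> obtain z' where "lts_step R z a z'" and "\<beta>'' = z' @ \<beta>"
      using lts_step_append_inv by metis
    with x_z have "long_move R tau \<Delta> p x a (T_out \<Delta> p z')"
      by (blast intro: long_move_step)
    from transfer[OF this] show ?thesis
      using w \<open>\<beta>'' = z' @ \<beta>\<close> by (simp add: T_out_append p_def)
  qed
qed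

lemma approx_q_prefix_cong:
  assumes "T_out \<Delta> (run_state \<Delta> q \<beta>) x \<noteq> []" and "T_out \<Delta> (run_state \<Delta> q \<beta>) y \<noteq> []"
    and "approx_q R tau \<Delta> (run_state \<Delta> q \<beta>) x y"
  shows "approx_q R tau \<Delta> q (x @ \<beta>) (y @ \<beta>)"
  unfolding approx_q_iff[of R tau \<Delta> q "x @ \<beta>"]
  using long_move_prefix_cong[OF assms(1,3)]
    long_move_prefix_cong[OF assms(2) approx_q_sym[OF assms(3)]] by blast

lemma consistent_approx_q_Cons_normal_form:
  assumes nfc: "nfc_transducer Q V \<Delta> q0" and con: "consistent Q V \<Delta> q0 R tau"
    and A: "A \<in> V" and \<nu>: "\<nu> \<in> lists V" "normal_form \<Delta> q0 \<nu>"
  shows "approx_q R tau \<Delta> q0 (A # \<nu>) (T_out \<Delta> q0 (A # \<nu>))"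
proof -
  define q where "q = run_state \<Delta> q0 \<nu>"
  have q0: "q0 \<in> Q" and tr: "transducer Q V \<Delta> q0"
    using nfc by (auto simp: nfc_transducer_def transducer_def)
  have q: "q \<in> Q"
    using transducer_run_closed[OF tr q0 \<nu>(1)] by (simp add: q_def)
  have T_out_A\<nu>: "T_out \<Delta> q0 (A # \<nu>) = T_out \<Delta> q [A] @ \<nu>"
    using T_out_append[of \<Delta> q0 "[A]" \<nu>] normal_form_T_out_self[OF \<nu>(2)] by (simp add: q_def)
  txt \<open>The three cases are covered by consistency clauses (2), (1) and (3) respectively.\<close>
  consider (visible) "T_out \<Delta> q [A] \<noteq> []" | (Nil) "T_out \<Delta> q [A] = []" "\<nu> = []"
    | (Cons) C \<nu>' where "T_out \<Delta> q [A] = []" "\<nu> = C # \<nu>'"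
    by (cases \<nu>) auto
  then show ?thesis
  proof cases
    case visible
    have "T_out \<Delta> q (T_out \<Delta> q [A]) = T_out \<Delta> q [A]"
      using nfc_transducer_run_T_out[OF nfc q, of "[A]"] A unfolding run_eq_iff
      by (simp del: T_out_singleton run_singleton)
    moreover have "approx_q R tau \<Delta> q [A] (T_out \<Delta> q [A])"
      using con q A visible by (simp add: consistent_def del: T_out_singleton)
    ultimately show ?thesis
      using approx_q_prefix_cong[of \<Delta> q0 \<nu> "[A]" "T_out \<Delta> q [A]"] visible T_out_A\<nu>
      by (simp add: q_def del: T_out_singleton)
  next
    case Nil
    then show ?thesis
      using con A T_out_A\<nu> by (simp add: q_def consistent_def del: T_out_singleton)
  next
    case Cons
    define p where "p = run_state \<Delta> q0 \<nu>'"
    have "normal_form \<Delta> p [C]"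
      using \<nu>(2) normal_form_append[of \<Delta> q0 "[C]" \<nu>'] by (simp add: Cons p_def)
    then have T_out_C: "T_out \<Delta> p [C] = [C]"
      by (rule normal_form_T_out_self)
    have "run_state \<Delta> p [C] = q"
      using run_state_append[of \<Delta> q0 "[C]" \<nu>'] by (simp add: Cons p_def q_def del: run_singleton)
    then have T_out_AC: "T_out \<Delta> p [A, C] = [C]"
      using T_out_append[of \<Delta> p "[A]" "[C]"] T_out_C Cons(1) by (simp del: T_out_singleton)
    have "p \<in> Q" and "C \<in> V"
      using transducer_run_closed[OF tr q0, of \<nu>'] \<nu>(1) by (auto simp: Cons p_def)
    then have "approx_q R tau \<Delta> p [A, C] [C]"
      using con A T_out_AC T_out_C by (simp add: consistent_def del: T_out_singleton)
    then have "approx_q R tau \<Delta> q0 ([A, C] @ \<nu>') ([C] @ \<nu>')"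
      using approx_q_prefix_cong[of \<Delta> q0 \<nu>' "[A, C]" "[C]"] T_out_AC T_out_C
      by (simp add: p_def del: T_out_singleton)
    then show ?thesis
      using T_out_A\<nu> Cons by simp
  qed
qed

lemma consistent_approx_q_T_out:
  assumes nfc: "nfc_transducer Q V \<Delta> q0" and con: "consistent Q V \<Delta> q0 R tau"
    and "\<alpha> \<in> lists V"
  shows "approx_q R tau \<Delta> q0 \<alpha> (T_out \<Delta> q0 \<alpha>)"
  using assms(3)
proof (induction \<alpha>)
  case Nil
  then show ?case by (simp add: approx_q_def)
next
  case (Cons A \<alpha>)
  define \<nu> where "\<nu> = T_out \<Delta> q0 \<alpha>"
  have q0: "q0 \<in> Q" and tr: "transducer Q V \<Delta> q0"
    using nfc by (auto simp: nfc_transducer_def transducer_def)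
  note A = \<open>A \<in> V\<close> and \<alpha> = \<open>\<alpha> \<in> lists V\<close>
  have run_\<nu>: "run \<Delta> q0 \<nu> = run \<Delta> q0 \<alpha>"
    unfolding \<nu>_def using nfc_transducer_run_T_out[OF nfc q0 \<alpha>] .
  have "approx_q R tau \<Delta> q0 ([A] @ \<alpha>) ([A] @ \<nu>)"
    using Cons.IH[folded \<nu>_def] run_\<nu>[symmetric] by (rule approx_q_suffix_cong)
  moreover have "approx_q R tau \<Delta> q0 (A # \<nu>) (T_out \<Delta> q0 (A # \<nu>))"
    using consistent_approx_q_Cons_normal_form[OF nfc con A]
      transducer_run_closed[OF tr q0 \<alpha>] nfc_transducer_normal_form_T_out[OF nfc q0 \<alpha>]
    by (simp add: \<nu>_def)
  moreover have "T_out \<Delta> q0 (A # \<nu>) = T_out \<Delta> q0 (A # \<alpha>)"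
    using T_out_append[of \<Delta> q0 "[A]"] run_\<nu> by (simp add: run_eq_iff del: T_out_singleton)
  ultimately show ?case
    by (auto intro: approx_q_trans)
qed

lemma T_equiv_converse: "(T_equiv V \<Delta> q0)\<inverse> = T_equiv V \<Delta> q0"
  by (auto simp: T_equiv_def)

lemma inert_steps_within_T_equiv:
  assumes bpa: "bpa_system V Act R" and "(inert_step R tau \<Delta> q0)\<^sup>*\<^sup>* t y"
    and "(s, t) \<in> T_equiv V \<Delta> q0"
  shows "(s, y) \<in> T_equiv V \<Delta> q0
    \<and> (\<lambda>x y. lts_step R x tau y \<and> (s, y) \<in> T_equiv V \<Delta> q0)\<^sup>*\<^sup>* t y"
  using assms(2)
proof (induction rule: rtranclp_induct)
  case base
  then show ?case using assms(3) by simp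
next
  case (step y z)
  have "z \<in> lists V"
    using step bpa_system_lts_step_lists[OF bpa] by (auto simp: inert_step_def T_equiv_def)
  moreover have "T_out \<Delta> q0 y = T_out \<Delta> q0 z"
    using step.hyps(2) by (simp add: inert_step_def)
  ultimately have "(s, z) \<in> T_equiv V \<Delta> q0"
    using step.IH by (auto simp: T_equiv_def)
  with step show ?case
    by (auto simp: inert_step_def intro: rtranclp.rtrancl_into_rtrancl)
qed

lemma consistent_T_equiv_bb_match:
  assumes bpa: "bpa_system V Act R" and nfc: "nfc_transducer Q V \<Delta> q0"
    and con: "consistent Q V \<Delta> q0 R tau" and st: "(s, t) \<in> T_equiv V \<Delta> q0"
  shows "bb_match R tau (T_equiv V \<Delta> q0) s t"
  unfolding bb_match_def
proof (intro allI impI)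
  fix a s' assume "lts_step R s a s'"
  have s: "s \<in> lists V" and t: "t \<in> lists V" and T_out_st: "T_out \<Delta> q0 s = T_out \<Delta> q0 t"
    using st by (auto simp: T_equiv_def)
  have s': "s' \<in> lists V"
    using bpa_system_lts_step_lists[OF bpa \<open>lts_step R s a s'\<close> s] .
  have "long_move R tau \<Delta> q0 s a (T_out \<Delta> q0 s')"
    using long_move_step[OF rtranclp.rtrancl_refl \<open>lts_step R s a s'\<close>] .
  then have "long_move R tau \<Delta> q0 t a (T_out \<Delta> q0 s')"
    using consistent_approx_q_T_out[OF nfc con s] consistent_approx_q_T_out[OF nfc con t] T_out_st
    by (simp add: approx_q_iff)
  then consider "a = tau" "T_out \<Delta> q0 s' = T_out \<Delta> q0 t"
    | tk t' where "(inert_step R tau \<Delta> q0)\<^sup>*\<^sup>* t tk" "lts_step R tk a t'"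
      "T_out \<Delta> q0 t' = T_out \<Delta> q0 s'"
    unfolding long_move_iff by metis
  then show "(a = tau \<and> (s', t) \<in> T_equiv V \<Delta> q0) \<or>
    (\<exists>tk t'. (\<lambda>x y. lts_step R x tau y \<and> (s, y) \<in> T_equiv V \<Delta> q0)\<^sup>*\<^sup>* t tk
      \<and> lts_step R tk a t' \<and> (s', t') \<in> T_equiv V \<Delta> q0)"
  proof cases
    case 1
    then show ?thesis using s' t by (simp add: T_equiv_def)
  next
    case 2
    then have s_tk: "(s, tk) \<in> T_equiv V \<Delta> q0"
      and "(\<lambda>x y. lts_step R x tau y \<and> (s, y) \<in> T_equiv V \<Delta> q0)\<^sup>*\<^sup>* t tk"
      using inert_steps_within_T_equiv[OF bpa _ st] by blast+
    moreover have "(s', t') \<in> T_equiv V \<Delta> q0"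
      using 2 s' s_tk bpa_system_lts_step_lists[OF bpa] by (auto simp: T_equiv_def)
    ultimately show ?thesis using 2 by blast
  qed
qed

theorem lemma4p3:
  fixes V :: "'v set" and Act :: "'a set" and R :: "('v \<times> 'a \<times> 'v list) set" and tau :: 'a
    and Q :: "'q set" and \<Delta> :: "'q \<Rightarrow> 'v \<Rightarrow> 'q \<times> 'v list" and q0 :: 'q
  assumes "bpa_system V Act R"
    and "nfc_transducer Q V \<Delta> q0"
    and "consistent Q V \<Delta> q0 R tau"
  shows "branching_bisimulation R tau (T_equiv V \<Delta> q0)
         \<and> (\<forall>\<alpha>\<in>lists V. \<forall>\<beta>\<in>lists V. T_out \<Delta> q0 \<alpha> = T_out \<Delta> q0 \<beta>
               \<longrightarrow> branching_bisimilar R tau \<alpha> \<beta>)"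
proof -
  have "branching_bisimulation R tau (T_equiv V \<Delta> q0)"
    unfolding branching_bisimulation_def T_equiv_converse
    using consistent_T_equiv_bb_match[OF assms] by (auto simp: T_equiv_def)
  then show ?thesis
    by (auto simp: branching_bisimilar_def T_equiv_def)
qed

end
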